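(* Fix $\eta\ge 2$, $\kappa>0$, transmit power $P'>0$ and $N>0$. For each $T\ge 3$ consider the $T$-node Gaussian multiple relay channel in which the nodes $1,\dots,T$ lie on a line with consecutive spacing $1$ (so $d_{it}=|i-t|$), every transmitting node has power constraint $E[X_i^2]\le P'$, and the noise variances satisfy $N_t\le N$. Then there is a constant $c>0$ depending only on $\eta,\kappa,P',N$ (not on $T$) such that, for every $T$, the two-hop myopic achievable rate of Theorem 1 (with jointly Gaussian inputs, $X_t$ a linear combination of independent Gaussian $U_t,U_{t+1}$ with a power split) is at least $c$; in particular two-hop myopic coding rates stay bounded away from zero as $T\to\infty$.
   Context: The Gaussian multiple relay channel is $Y_t=\sum_{i=1,\,i\ne t}^{T-1}\sqrt{\kappa d_{it}^{-\eta}}\,X_i+Z_t$ for $t=2,\dots,T$, where $Z_t\sim\mathcal N(0,N_t)$ are independent of the inputs and of each other, $d_{it}$ is the distance between nodes $i$ and $t$, and $\eta$ is the path loss exponent. The two-hop achievable rate is $\min_{t\in\{2,\dots,T\}} I(U_{t-2},U_{t-1};Y_t\mid U_t,U_{t+1})$ with $U_0=U_T=U_{T+1}=0$, where $U_1,\dots,U_{T-1}$ are independent, $X_t$ is a function of $(U_t,U_{t+1})$ for $t\le T-2$ and $X_{T-1}$ a function of $U_{T-1}$; signals of nodes not in $\{U_{t-2},\dots,U_{t+1}\}$ are treated as noise at node $t$. *)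

theory Defs
  imports Complex_Main
begin

definition gain :: "real \<Rightarrow> real \<Rightarrow> nat \<Rightarrow> nat \<Rightarrow> real" where
  "gain \<kappa> \<eta> i t = sqrt (\<kappa> * (\<bar>real i - real t\<bar> powr (- \<eta>)))"

text \<open>Gaussian two-hop scheme: U_1..U_(T-1) independent standard Gaussians,
  X_i = a i * U_i + b i * U_(i+1) for i <= T-2, X_(T-1) = a (T-1) * U_(T-1).
  Coefficient of U_j in Y_t (transmitters are nodes 1..T-1, node t does not
  hear itself):\<close>
definition ucoef :: "real \<Rightarrow> real \<Rightarrow> nat \<Rightarrow> (nat \<Rightarrow> real) \<Rightarrow> (nat \<Rightarrow> real)
    \<Rightarrow> nat \<Rightarrow> nat \<Rightarrow> real" where
  "ucoef \<kappa> \<eta> T a b j t =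
     (if 1 \<le> j \<and> j \<le> T - 1 \<and> j \<noteq> t then gain \<kappa> \<eta> j t * a j else 0)
   + (if 2 \<le> j \<and> j - 1 \<le> T - 2 \<and> j - 1 \<noteq> t then gain \<kappa> \<eta> (j - 1) t * b (j - 1) else 0)"

definition power_ok :: "real \<Rightarrow> nat \<Rightarrow> (nat \<Rightarrow> real) \<Rightarrow> (nat \<Rightarrow> real) \<Rightarrow> bool" where
  "power_ok P' T a b \<longleftrightarrow>
     (\<forall>i\<in>{1..T-2}. (a i)\<^sup>2 + (b i)\<^sup>2 \<le> P') \<and> (a (T - 1))\<^sup>2 \<le> P'"

text \<open>I(U_(t-2), U_(t-1); Y_t | U_t, U_(t+1)) (in bits) for the jointly Gaussian
  scheme, with U_0 = U_T = U_(T+1) = 0 (i.e. only indices 1..T-1 exist):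
  h(Y_t | U_t,U_(t+1)) - h(Y_t | U_(t-2),...,U_(t+1)).\<close>
definition hop_info :: "real \<Rightarrow> real \<Rightarrow> nat \<Rightarrow> (nat \<Rightarrow> real) \<Rightarrow> (nat \<Rightarrow> real)
    \<Rightarrow> (nat \<Rightarrow> real) \<Rightarrow> nat \<Rightarrow> real" where
  "hop_info \<kappa> \<eta> T a b Nv t =
     1/2 * log 2
       ((Nv t + (\<Sum>j\<in>{1..T-1} - {t, t+1}. (ucoef \<kappa> \<eta> T a b j t)\<^sup>2)) /
        (Nv t + (\<Sum>j\<in>{1..T-1} - {t-2, t-1, t, t+1}. (ucoef \<kappa> \<eta> T a b j t)\<^sup>2)))"

definition two_hop_rate :: "real \<Rightarrow> real \<Rightarrow> nat \<Rightarrow> (nat \<Rightarrow> real) \<Rightarrow> (nat \<Rightarrow> real)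
    \<Rightarrow> (nat \<Rightarrow> real) \<Rightarrow> real" where
  "two_hop_rate \<kappa> \<eta> T a b Nv = Min ((hop_info \<kappa> \<eta> T a b Nv) ` {2..T})"

end

theory Submission imports Defs begin

text \<open>Let every transmitter spend its whole power on its own message, X_i = sqrt P' U_i.
  At node t the message U_(t-1) then arrives from distance 1 with power \<kappa> P', while
  every message treated as noise arrives from a distance d \<ge> 2 to the left or to the
  right. Since d^(-\<eta>) \<le> d^(-2) \<le> 1/(d-1) - 1/d, the noise power on each side
  telescopes to at most \<kappa> P', so every hop carries at least
  1/2 log(1 + \<kappa> P' / (N + 2 \<kappa> P')) bits, whatever T is.\<close>

lemma powr_neg_le_inverse_diff:
  fixes d \<eta> :: real
  assumes "d \<ge> 2" "\<eta> \<ge> 2"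
  shows "d powr (-\<eta>) \<le> 1/(d-1) - 1/d"
proof -
  have "d powr (-\<eta>) \<le> d powr (-2)" using assms by (intro powr_mono) auto
  also have "\<dots> = 1/d^2" using assms by (simp add: powr_minus powr_realpow divide_inverse)
  also have "\<dots> \<le> 1/(d-1) - 1/d" using assms by (simp add: field_simps power2_eq_square)
  finally show ?thesis .
qed

lemma sum_powr_neg_le_1:
  fixes D :: "nat set" and \<eta> :: real
  assumes "finite D" "D \<subseteq> {2..}" "\<eta> \<ge> 2"
  shows "(\<Sum>d\<in>D. real d powr (-\<eta>)) \<le> 1"
proof -
  define n where "n = Max (insert 1 D)"
  have "n \<ge> 1" "D \<subseteq> {Suc 1..n}"
    using assms(1,2) by (auto simp: n_def)
  then have "(\<Sum>d\<in>D. real d powr (-\<eta>)) \<le> (\<Sum>d\<in>{Suc 1..n}. real d powr (-\<eta>))"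
    by (intro sum_mono2) auto
  also have "\<dots> \<le> (\<Sum>d\<in>{Suc 1..n}. (- 1/real d) - (- 1/real (d - 1)))"
    by (intro sum_mono) (use assms(3) powr_neg_le_inverse_diff in auto)
  also have "\<dots> = 1 - 1/real n"
    using \<open>n \<ge> 1\<close> by (subst sum_telescope'') auto
  also have "\<dots> \<le> 1" by simp
  finally show ?thesis .
qed

lemma sum_two_sided_powr_neg_le_2:
  fixes S :: "nat set" and t :: nat and \<eta> :: real
  assumes "finite S" "\<forall>j\<in>S. j + 2 \<le> t \<or> t + 2 \<le> j" "\<eta> \<ge> 2"
  shows "(\<Sum>j\<in>S. \<bar>real j - real t\<bar> powr (-\<eta>)) \<le> 2"
proof -
  let ?f = "\<lambda>j. \<bar>real j - real t\<bar> powr (-\<eta>)"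
  define L where "L = {j\<in>S. j < t}"
  define R where "R = {j\<in>S. t < j}"
  have "S = L \<union> R" "L \<inter> R = {}" using assms(2) by (auto simp: L_def R_def)
  then have "sum ?f S = sum ?f L + sum ?f R"
    using assms(1) by (metis finite_Un sum.union_disjoint)
  also have "sum ?f L = (\<Sum>d\<in>(\<lambda>j. t - j) ` L. real d powr (-\<eta>))"
  proof -
    have "inj_on (\<lambda>j. t - j) L" by (intro inj_onI) (auto simp: L_def)
    then show ?thesis by (simp add: sum.reindex L_def)
  qed
  also have "\<dots> \<le> 1"
    using assms by (intro sum_powr_neg_le_1) (auto simp: L_def)
  also have "sum ?f R = (\<Sum>d\<in>(\<lambda>j. j - t) ` R. real d powr (-\<eta>))"
  proof -
    have "inj_on (\<lambda>j. j - t) R" by (intro inj_onI) (auto simp: R_def)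
    then show ?thesis by (simp add: sum.reindex R_def)
  qed
  also have "\<dots> \<le> 1"
    using assms by (intro sum_powr_neg_le_1) (auto simp: R_def)
  finally show ?thesis by simp
qed

lemma ucoef_own_message_sq:
  assumes "\<kappa> \<ge> 0" "j \<in> {1..T-1}" "j \<noteq> t"
  shows "(ucoef \<kappa> \<eta> T (\<lambda>_. s) (\<lambda>_. 0) j t)\<^sup>2
           = \<kappa> * s\<^sup>2 * \<bar>real j - real t\<bar> powr (-\<eta>)"
  using assms by (simp add: ucoef_def gain_def power_mult_distrib)

lemma hop_info_own_message_ge:
  fixes \<eta> \<kappa> P' N :: real
  assumes "\<eta> \<ge> 2" "\<kappa> > 0" "P' > 0" "N > 0"
    and "t \<in> {2..T}" "0 < Nv t" "Nv t \<le> N"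
  shows "1/2 * log 2 (1 + \<kappa> * P' / (N + 2 * (\<kappa> * P')))
           \<le> hop_info \<kappa> \<eta> T (\<lambda>_. sqrt P') (\<lambda>_. 0) Nv t"
proof -
  define K where "K = \<kappa> * P'"
  let ?q = "\<lambda>j. (ucoef \<kappa> \<eta> T (\<lambda>_. sqrt P') (\<lambda>_. 0) j t)\<^sup>2"
  define Unknown where "Unknown = {1..T-1} - {t, t+1}"
  define Noise where "Noise = {1..T-1} - {t-2, t-1, t, t+1}"
  have q: "?q j = K * \<bar>real j - real t\<bar> powr (-\<eta>)" if "j \<in> {1..T-1}" "j \<noteq> t" for j
    using that assms(2,3) by (simp add: ucoef_own_message_sq K_def)
  have "sum ?q Noise = K * (\<Sum>j\<in>Noise. \<bar>real j - real t\<bar> powr (-\<eta>))"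
    by (simp add: q Noise_def sum_distrib_left)
  also have "\<dots> \<le> K * 2"
    using assms(1,2,3,5)
    by (intro mult_left_mono sum_two_sided_powr_neg_le_2) (auto simp: Noise_def K_def)
  finally have interference: "sum ?q Noise \<le> 2 * K" by simp
  have "?q (t-1) = K"
    using assms(5) by (subst q) auto
  moreover have "sum ?q (insert (t-1) Noise) \<le> sum ?q Unknown"
    using assms(5) by (intro sum_mono2) (auto simp: Unknown_def Noise_def)
  ultimately have signal: "sum ?q Noise + K \<le> sum ?q Unknown" by (simp add: Noise_def)
  define D where "D = Nv t + sum ?q Noise"
  have "0 \<le> sum ?q Noise" by (intro sum_nonneg) simp
  then have "0 < D" "D \<le> N + 2 * K"
    using assms(6,7) interference by (auto simp: D_def)
  have "1 + K / (N + 2 * K) \<le> 1 + K / D"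
    using \<open>0 < D\<close> \<open>D \<le> N + 2 * K\<close> assms(2,3)
    by (intro add_left_mono divide_left_mono) (auto simp: K_def)
  also have "\<dots> = (D + K) / D" using \<open>0 < D\<close> by (simp add: field_simps)
  also have "\<dots> \<le> (Nv t + sum ?q Unknown) / D"
    using \<open>0 < D\<close> signal by (intro divide_right_mono) (auto simp: D_def)
  finally have "log 2 (1 + K / (N + 2 * K)) \<le> log 2 ((Nv t + sum ?q Unknown) / D)"
    using assms(2,3,4) by (intro log_mono) (auto simp: K_def add_pos_pos)
  then show ?thesis by (simp add: hop_info_def D_def Unknown_def Noise_def K_def)
qed

theorem mainTheorem3:
  fixes \<eta> \<kappa> P' N :: real
  assumes "\<eta> \<ge> 2" and "\<kappa> > 0" and "P' > 0" and "N > 0"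
  shows "\<exists>c>0. \<forall>T::nat. T \<ge> 3 \<longrightarrow>
           (\<forall>Nv::nat \<Rightarrow> real. (\<forall>t\<in>{2..T}. 0 < Nv t \<and> Nv t \<le> N) \<longrightarrow>
              (\<exists>a b. power_ok P' T a b \<and> two_hop_rate \<kappa> \<eta> T a b Nv \<ge> c))"
proof -
  define c where "c = 1/2 * log 2 (1 + \<kappa> * P' / (N + 2 * (\<kappa> * P')))"
  have "c > 0" using assms by (simp add: c_def add_pos_pos)
  moreover have "power_ok P' T (\<lambda>_. sqrt P') (\<lambda>_. 0)" for T
    using assms(3) by (simp add: power_ok_def)
  moreover have "c \<le> two_hop_rate \<kappa> \<eta> T (\<lambda>_. sqrt P') (\<lambda>_. 0) Nv"
    if "T \<ge> 3" "\<forall>t\<in>{2..T}. 0 < Nv t \<and> Nv t \<le> N" for T Nv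
    unfolding two_hop_rate_def
    using that hop_info_own_message_ge[OF assms, folded c_def]
    by (subst Min_ge_iff) auto
  ultimately show ?thesis by blast
qed

end
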